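(* Let $N=pq$ with $p\neq q$ odd primes, and write $\left(\frac{\cdot}{N}\right)$ for the Jacobi symbol modulo $N$. Let $\mu\in\mathsf{J}(N)\setminus\mathsf{QR}(N)$ and $R_1,R_2\in\mathsf{J}(N)$. Let $\alpha_1,\alpha_2$ be integers such that $\mu^{\alpha_1}R_1\in\mathsf{QR}(N)$ and $\mu^{\alpha_2}R_2\in\mathsf{QR}(N)$. Let $\rho_1\in\mathbb{Z}_N$ be a square root of $\mu^{\alpha_1}R_1$ modulo $N$. Let $s_1,s_2\in\mathbb{Z}_N^{\times}$ and set $S_1=s_1^2 \bmod N$, $S_2=s_2^2\bmod N$. Fix an integer $i\ge 1$. Let $(x_i,y_i)$ and $(x_{i+1},y_{i+1})$ be elements of $\mathbb{Z}_N^2$ satisfying \[ \mu^{\alpha_1}R_1 S_1^{2i+1} x_i^2 + \mu^{\alpha_2}R_2 S_2^{2i+1}y_i^2 = 1 \bmod N, \qquad \mu^{\alpha_1}R_1 S_1^{2i+3} x_{i+1}^2 + \mu^{\alpha_2}R_2 S_2^{2i+3}y_{i+1}^2 = 1 \bmod N. \] Define \[ k_i=\left(\frac{1+x_i s_1^{2i+1}\rho_1}{N}\right),\qquad k_{i+1}=\left(\frac{1+x_{i+1} s_1^{2i+3}\rho_1}{N}\right), \qquad D = 1 + \mu^{\alpha_1}R_1 S_1^{2i+2} x_i x_{i+1}, \] and assume $D\in\mathbb{Z}_N^{\times}$. Set \[ x_* = \frac{x_i + S_1 x_{i+1}}{D},\qquad y_* = \frac{y_i y_{i+1}}{D}\quad(\text{in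 } \mathbb{Z}_N), \] so that $(x_*,y_* )$ is a solution of \[ \mu^{\alpha_1}R_1 S_1^{2i+1} x_*^2 + \mu^{2\alpha_2}R_2^2 S_2^{4i+4}y_*^2 = 1 \bmod N. \] Assume moreover that $1+x_i s_1^{2i+1}\rho_1$, $1+x_{i+1} s_1^{2i+3}\rho_1$ and $2 + 2y_* \mu^{\alpha_2}R_2 S_2^{2i+2}$ are units of $\mathbb{Z}_N$. Then \[ k_{i+1}= k_i \cdot \left(\frac{D}{N}\right)\cdot\left(\frac{2 + 2y_* \mu^{\alpha_2}R_2 S_2^{2i+2}}{N}\right). \]
   Context: $\mathbb{Z}_N^{\times}$ is the multiplicative group of units modulo $N$. $\mathsf{QR}(N)=\{y\in\mathbb{Z}_N^\times : \exists x\in\mathbb{Z}_N^\times,\ y=x^2 \bmod N\}$ is the set of quadratic residues, and $\mathsf{J}(N)$ is the set of elements of $\mathbb{Z}_N$ whose Jacobi symbol modulo $N$ equals $1$. In the paper's setting (the Elashry–Mu–Susilo key exchange), $R_j=\mathcal{H}(\mathrm{id}_j)$ are hashed identities, $(\mu^{\alpha_j},S_j)$ are the publicly exchanged values of party $P_j$, and $k_i$, $k_{i+1}$ are the $i$-th and $(i+1)$-th bits of the shared secret key. *)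

theory Defs
  imports "HOL-Number_Theory.Number_Theory"
begin

definition Jacobi :: "int \<Rightarrow> int \<Rightarrow> int" where
  "Jacobi a n = (\<Prod>p\<in>prime_factors n. Legendre a p ^ multiplicity p n)"

definition zpow_mod :: "int \<Rightarrow> int \<Rightarrow> int \<Rightarrow> int" where
  "zpow_mod N a k = (if 0 \<le> k then a ^ nat k else modular_inverse N a ^ nat (- k)) mod N"

definition ZN :: "int \<Rightarrow> int set" where
  "ZN N = {0..<N}"

definition ZN_units :: "int \<Rightarrow> int set" where
  "ZN_units N = {y \<in> ZN N. coprime y N}"

definition QR :: "int \<Rightarrow> int set" where
  "QR N = {y \<in> ZN_units N. \<exists>x \<in> ZN_units N. [y = x^2] (mod N)}"

definition JN :: "int \<Rightarrow> int set" where
  "JN N = {y \<in> ZN N. Jacobi y N = 1}"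

end

theory Submission
  imports Defs
begin

text \<open>Put \<open>u = x\<^sub>i s\<^sub>1\<^bsup>2i+1\<^esup> \<rho>\<^sub>1\<close>, \<open>v = x\<^sub>i\<^sub>+\<^sub>1 s\<^sub>1\<^bsup>2i+3\<^esup> \<rho>\<^sub>1\<close>,
  \<open>Y = y\<^sub>i s\<^sub>2\<^bsup>2i+1\<^esup>\<close>, \<open>Y' = y\<^sub>i\<^sub>+\<^sub>1 s\<^sub>2\<^bsup>2i+3\<^esup>\<close> and \<open>b = \<mu>\<^bsup>\<alpha>\<^sub>2\<^esup> R\<^sub>2\<close>.
  The two curve equations become the conic equations \<open>u\<^sup>2 + b Y\<^sup>2 = 1\<close> and
  \<open>v\<^sup>2 + b Y'\<^sup>2 = 1\<close>, and for the argument \<open>E\<close> of the last symbol \<open>D E = 2(1 + u v) + 2 b Y Y'\<close>.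
  On the conic, \<open>(1+u)(1+v) D E\<close> is the square of \<open>(1+u)(1+v) + b Y Y'\<close>, so its Jacobi
  symbol is \<open>1\<close>; since the symbols of units are \<open>\<plusminus>1\<close>, multiplicativity gives the claim.\<close>

lemma Legendre_cong:
  assumes "[a = b] (mod p)"
  shows "Legendre a p = Legendre b p"
proof -
  have "[a = 0] (mod p) \<longleftrightarrow> [b = 0] (mod p)" and "QuadRes p a \<longleftrightarrow> QuadRes p b"
    using assms unfolding QuadRes_def by (meson cong_sym cong_trans)+
  then show ?thesis unfolding Legendre_def by simp
qed

lemma Legendre_mult:
  assumes "prime p" "2 < p"
  shows "Legendre (a * b) p = Legendre a p * Legendre b p"
proof -
  obtain n where n: "p = int n" using assms prime_ge_0_int nonneg_int_cases by metis
  have pn: "prime n" "2 < n" using assms n by auto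
  have "[Legendre (a * b) p = (a * b) ^ ((n - 1) div 2)] (mod p)"
    using euler_criterion[OF pn] n by simp
  moreover have "[Legendre a p * Legendre b p = a ^ ((n - 1) div 2) * b ^ ((n - 1) div 2)] (mod p)"
    using euler_criterion[OF pn] n by (intro cong_mult) auto
  ultimately have "[Legendre (a * b) p = Legendre a p * Legendre b p] (mod p)"
    by (metis cong_sym cong_trans power_mult_distrib)
  moreover have "\<bar>Legendre (a * b) p - Legendre a p * Legendre b p\<bar> < p"
    using assms unfolding Legendre_def by auto
  ultimately show ?thesis
    using dvd_imp_le_int[of "Legendre (a * b) p - Legendre a p * Legendre b p" p] assms(2)
    by (force simp: cong_iff_dvd_diff)
qed

lemma Legendre_power2:
  assumes "prime p" "\<not> p dvd x"
  shows "Legendre (x ^ 2) p = 1"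
proof -
  have "\<not> [x ^ 2 = 0] (mod p)"
    using assms prime_dvd_power by (auto simp: cong_0_iff)
  moreover have "QuadRes p (x ^ 2)" unfolding QuadRes_def by (blast intro: cong_refl)
  ultimately show ?thesis unfolding Legendre_def by simp
qed

lemma prime_factor_of_odd_gt_2:
  fixes n :: int
  assumes "odd n" "p \<in> prime_factors n"
  shows "2 < p"
proof -
  have "prime p" "p dvd n" using assms(2) by auto
  then show ?thesis using assms(1) prime_ge_2_int[of p] by (cases "p = 2") auto
qed

lemma Jacobi_mult:
  assumes "odd n"
  shows "Jacobi (a * b) n = Jacobi a n * Jacobi b n"
  unfolding Jacobi_def prod.distrib[symmetric]
  by (intro prod.cong refl)
    (simp add: Legendre_mult in_prime_factors_imp_prime prime_factor_of_odd_gt_2[OF assms]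
      power_mult_distrib)

lemma Jacobi_cong:
  assumes "[a = b] (mod n)"
  shows "Jacobi a n = Jacobi b n"
  unfolding Jacobi_def
  by (intro prod.cong refl arg_cong2[where f = power] Legendre_cong)
    (auto intro: cong_dvd_modulus[OF assms])

lemma Jacobi_power2:
  assumes "coprime x n"
  shows "Jacobi (x ^ 2) n = 1"
proof -
  have "\<not> p dvd x" if "p \<in> prime_factors n" for p
    using that assms by (metis coprime_common_divisor in_prime_factors_iff not_prime_unit)
  then show ?thesis
    unfolding Jacobi_def by (intro prod.neutral ballI)
      (simp add: Legendre_power2 in_prime_factors_imp_prime)
qed

lemma Jacobi_eq_if_mult_cong_square:
  assumes "odd n" "[a * b = x ^ 2] (mod n)" "coprime a n" "coprime b n"
  shows "Jacobi a n = Jacobi b n"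
proof -
  have "coprime (x ^ 2) n"
    using cong_imp_coprime[OF assms(2)] assms(3,4) by simp
  then have "coprime x n" by simp
  have "Jacobi b n * Jacobi b n = 1"
    using Jacobi_power2[OF assms(4)] Jacobi_mult[OF assms(1)] by (simp add: power2_eq_square)
  moreover have "Jacobi a n * Jacobi b n = Jacobi (x ^ 2) n"
    using Jacobi_mult[OF assms(1)] Jacobi_cong[OF assms(2)] by simp
  with \<open>coprime x n\<close> have "Jacobi a n * Jacobi b n = 1" by (simp add: Jacobi_power2)
  ultimately show ?thesis by (metis mult.assoc mult_1 mult_1_right)
qed

lemma cong_mult_modular_inverse_cancel:
  assumes "coprime (a :: int) n"
  shows "[a * (c * modular_inverse n a mod n) = c] (mod n)"
proof -
  have "[a * (c * modular_inverse n a mod n) = c * (a * modular_inverse n a)] (mod n)"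
    by (simp add: cong_def mod_mult_right_eq ac_simps)
  also have "[c * (a * modular_inverse n a) = c * 1] (mod n)"
    by (intro cong_mult cong_refl cong_modular_inverse1 assms)
  finally show ?thesis by simp
qed

lemma power_cong_split:
  fixes S s :: int
  assumes "[S = s ^ 2] (mod n)" "j + k = 2 * m"
  shows "[S ^ m = s ^ j * s ^ k] (mod n)"
proof -
  have "[S ^ m = (s ^ 2) ^ m] (mod n)" by (intro cong_pow assms)
  also have "(s ^ 2) ^ m = s ^ j * s ^ k" by (simp add: assms(2) flip: power_mult power_add)
  finally show ?thesis .
qed

lemma curve_equation_normalise:
  fixes a b S T s t x y \<rho> :: int
  assumes "[a = \<rho> ^ 2] (mod n)" "[S = s ^ 2] (mod n)" "[T = t ^ 2] (mod n)"
    and "[a * S ^ k * x ^ 2 + b * T ^ k * y ^ 2 = 1] (mod n)"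
  shows "[(x * s ^ k * \<rho>) ^ 2 + b * (y * t ^ k) ^ 2 = 1] (mod n)"
proof -
  have "[a * S ^ k * x ^ 2 + b * T ^ k * y ^ 2
        = \<rho> ^ 2 * (s ^ 2) ^ k * x ^ 2 + b * (t ^ 2) ^ k * y ^ 2] (mod n)"
    by (intro cong_add cong_mult cong_pow assms(1-3) cong_refl)
  moreover have "(s ^ 2) ^ k = (s ^ k) ^ 2" "(t ^ 2) ^ k = (t ^ k) ^ 2"
    by (simp_all add: mult.commute flip: power_mult)
  ultimately show ?thesis
    using cong_trans[OF cong_sym assms(4)] by (simp add: power_mult_distrib ac_simps)
qed

lemma conic_product_cong_square:
  fixes u v b Y Y' :: int
  assumes "[u ^ 2 + b * Y ^ 2 = 1] (mod n)" "[v ^ 2 + b * Y' ^ 2 = 1] (mod n)"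
  shows "[(1 + u) * (1 + v) * (2 * (1 + u * v) + 2 * b * (Y * Y'))
          = ((1 + u) * (1 + v) + b * (Y * Y')) ^ 2] (mod n)"
proof -
  have "n dvd 1 - (u ^ 2 + b * Y ^ 2)" "n dvd 1 - (v ^ 2 + b * Y' ^ 2)"
    using cong_sym[OF assms(1)] cong_sym[OF assms(2)] by (simp_all add: cong_iff_dvd_diff)
  then have "n dvd (1 - (u ^ 2 + b * Y ^ 2)) * (1 - v ^ 2) + b * Y ^ 2 * (1 - (v ^ 2 + b * Y' ^ 2))"
    by simp
  moreover have "(1 - (u ^ 2 + b * Y ^ 2)) * (1 - v ^ 2) + b * Y ^ 2 * (1 - (v ^ 2 + b * Y' ^ 2))
      = (1 + u) * (1 + v) * (2 * (1 + u * v) + 2 * b * (Y * Y'))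
        - ((1 + u) * (1 + v) + b * (Y * Y')) ^ 2"
    by (simp add: power2_eq_square algebra_simps)
  ultimately show ?thesis by (simp add: cong_iff_dvd_diff)
qed

lemma Jacobi_conic_addition:
  fixes u v b Y Y' D E :: int
  assumes "odd n" "[u ^ 2 + b * Y ^ 2 = 1] (mod n)" "[v ^ 2 + b * Y' ^ 2 = 1] (mod n)"
    and "[D * E = 2 * (1 + u * v) + 2 * b * (Y * Y')] (mod n)"
    and "coprime (1 + u) n" "coprime (1 + v) n" "coprime D n" "coprime E n"
  shows "Jacobi (1 + v) n = Jacobi (1 + u) n * Jacobi D n * Jacobi E n"
proof -
  have "[(1 + v) * ((1 + u) * D * E) = (1 + u) * (1 + v) * (2 * (1 + u * v) + 2 * b * (Y * Y'))] (mod n)"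
    using cong_mult[OF cong_refl[of "(1 + u) * (1 + v)"] assms(4)] by (simp add: ac_simps)
  also note conic_product_cong_square[OF assms(2,3)]
  finally have "Jacobi (1 + v) n = Jacobi ((1 + u) * D * E) n"
    by (rule Jacobi_eq_if_mult_cong_square[OF assms(1)]) (simp_all add: assms(5-8))
  then show ?thesis by (simp add: Jacobi_mult[OF assms(1)])
qed

theorem mainTheorem1:
  fixes p q N \<mu> R1 R2 \<alpha>1 \<alpha>2 \<rho>1 s1 s2 S1 S2 xi yi xi1 yi1 :: int
    and i :: nat
  assumes "prime p" and "prime q" and "odd p" and "odd q" and "p \<noteq> q" and "N = p * q"
    and "\<mu> \<in> JN N - QR N" and "R1 \<in> JN N" and "R2 \<in> JN N"
    and "zpow_mod N \<mu> \<alpha>1 * R1 mod N \<in> QR N"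
    and "zpow_mod N \<mu> \<alpha>2 * R2 mod N \<in> QR N"
    and "\<rho>1 \<in> ZN N" and "[\<rho>1^2 = zpow_mod N \<mu> \<alpha>1 * R1] (mod N)"
    and "s1 \<in> ZN_units N" and "s2 \<in> ZN_units N"
    and "S1 = s1^2 mod N" and "S2 = s2^2 mod N"
    and "i \<ge> 1"
    and "xi \<in> ZN N" and "yi \<in> ZN N" and "xi1 \<in> ZN N" and "yi1 \<in> ZN N"
    and "[zpow_mod N \<mu> \<alpha>1 * R1 * S1^(2*i+1) * xi^2
          + zpow_mod N \<mu> \<alpha>2 * R2 * S2^(2*i+1) * yi^2 = 1] (mod N)"
    and "[zpow_mod N \<mu> \<alpha>1 * R1 * S1^(2*i+3) * xi1^2
          + zpow_mod N \<mu> \<alpha>2 * R2 * S2^(2*i+3) * yi1^2 = 1] (mod N)"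
    and "D = 1 + zpow_mod N \<mu> \<alpha>1 * R1 * S1^(2*i+2) * xi * xi1"
    and "coprime D N"
    and "ystar = yi * yi1 * modular_inverse N D mod N"
    and "coprime (1 + xi * s1^(2*i+1) * \<rho>1) N"
    and "coprime (1 + xi1 * s1^(2*i+3) * \<rho>1) N"
    and "coprime (2 + 2 * ystar * zpow_mod N \<mu> \<alpha>2 * R2 * S2^(2*i+2)) N"
  shows "Jacobi (1 + xi1 * s1^(2*i+3) * \<rho>1) N =
           Jacobi (1 + xi * s1^(2*i+1) * \<rho>1) N * Jacobi D N
           * Jacobi (2 + 2 * ystar * zpow_mod N \<mu> \<alpha>2 * R2 * S2^(2*i+2)) N"
proof -
  define b where "b = zpow_mod N \<mu> \<alpha>2 * R2"
  define u where "u = xi * s1 ^ (2 * i + 1) * \<rho>1"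
  define v where "v = xi1 * s1 ^ (2 * i + 3) * \<rho>1"
  define Y where "Y = yi * s2 ^ (2 * i + 1)"
  define Y' where "Y' = yi1 * s2 ^ (2 * i + 3)"
  define E where "E = 2 + 2 * ystar * zpow_mod N \<mu> \<alpha>2 * R2 * S2 ^ (2 * i + 2)"
  have \<rho>1: "[zpow_mod N \<mu> \<alpha>1 * R1 = \<rho>1 ^ 2] (mod N)" using assms(13) by (rule cong_sym)
  have S1: "[S1 = s1 ^ 2] (mod N)" and S2: "[S2 = s2 ^ 2] (mod N)"
    using assms(16,17) by (simp_all add: cong_def)
  have conic1: "[u ^ 2 + b * Y ^ 2 = 1] (mod N)"
    unfolding u_def Y_def b_def by (rule curve_equation_normalise[OF \<rho>1 S1 S2 assms(23)])
  have conic2: "[v ^ 2 + b * Y' ^ 2 = 1] (mod N)"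
    unfolding v_def Y'_def b_def by (rule curve_equation_normalise[OF \<rho>1 S1 S2 assms(24)])
  have "[D = 1 + \<rho>1 ^ 2 * (s1 ^ (2 * i + 1) * s1 ^ (2 * i + 3)) * xi * xi1] (mod N)"
    unfolding assms(25) by (intro cong_add cong_mult \<rho>1 power_cong_split[OF S1] cong_refl) simp
  then have D: "[D = 1 + u * v] (mod N)"
    unfolding u_def v_def by (simp add: power2_eq_square ac_simps)
  have "[D * E = 2 * D + 2 * (D * ystar) * b * S2 ^ (2 * i + 2)] (mod N)"
    unfolding E_def b_def by (simp add: algebra_simps)
  also have "[2 * D + 2 * (D * ystar) * b * S2 ^ (2 * i + 2)
      = 2 * (1 + u * v) + 2 * (yi * yi1) * b * (s2 ^ (2 * i + 1) * s2 ^ (2 * i + 3))] (mod N)"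
    unfolding assms(27)
    by (intro cong_add cong_mult cong_refl D cong_mult_modular_inverse_cancel assms(26)
        power_cong_split[OF S2]) simp
  finally have DE: "[D * E = 2 * (1 + u * v) + 2 * b * (Y * Y')] (mod N)"
    unfolding Y_def Y'_def by (simp add: ac_simps)
  have "odd N" using assms(3,4,6) by simp
  from Jacobi_conic_addition[OF this conic1 conic2 DE] assms(26,28-30)
  show ?thesis unfolding u_def v_def E_def by simp
qed

end
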